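(* Let $\Omega$ be a compact Riemannian manifold without boundary, let $K:\Omega\times\Omega\to\mathbb{R}$ be continuous, and let $\beta>0$. Define for $p\in\mathcal{P}(\Omega)$ $$F_{p,\beta}(p)=\beta^{-1}\log Z_q(p)+\beta^{-1}S(p),\qquad Z_q(p)=\int_\Omega\exp\Big(\beta\int_\Omega K(x,y)p(x)\,dx\Big)dy,\qquad S(p)=\int_\Omega p\log p\,dx.$$ Then for any two distinct probability densities $p_1\neq p_2$ on $\Omega$ with $S(p_1),S(p_2)<\infty$ and any $\lambda\in(0,1)$, $$F_{p,\beta}(\lambda p_1+(1-\lambda)p_2)<\lambda F_{p,\beta}(p_1)+(1-\lambda)F_{p,\beta}(p_2).$$
   Context: $\mathcal{P}(\Omega)$ is the set of probability distributions on $\Omega$, identified with densities with respect to the Riemannian volume measure; $S(p)=+\infty$ if $p$ has no density. *)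

theory Defs
  imports "HOL-Analysis.Analysis"
begin

definition plogp :: "real \<Rightarrow> real" where
  "plogp t = (if t = 0 then 0 else t * ln t)"

definition is_density :: "'a measure \<Rightarrow> ('a \<Rightarrow> real) \<Rightarrow> bool" where
  "is_density M p \<longleftrightarrow> p \<in> borel_measurable M \<and> (\<forall>x\<in>space M. 0 \<le> p x)
     \<and> integrable M p \<and> (\<integral>x. p x \<partial>M) = 1"

text \<open>Entropy S(p) = int p log p, equal to +infinity when p log p is not integrable
  (it is always bounded below on a finite measure space).\<close>
definition entropy :: "'a measure \<Rightarrow> ('a \<Rightarrow> real) \<Rightarrow> ereal" where
  "entropy M p = (if integrable M (\<lambda>x. plogp (p x)) then ereal (\<integral>x. plogp (p x) \<partial>M) else \<infinity>)"

definition partition_fn :: "'a measure \<Rightarrow> ('a \<Rightarrow> 'a \<Rightarrow> real) \<Rightarrow> real \<Rightarrow> ('a \<Rightarrow> real) \<Rightarrow> real" where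
  "partition_fn M K \<beta> p = (\<integral>y. exp (\<beta> * (\<integral>x. K x y * p x \<partial>M)) \<partial>M)"

definition free_energy :: "'a measure \<Rightarrow> ('a \<Rightarrow> 'a \<Rightarrow> real) \<Rightarrow> real \<Rightarrow> ('a \<Rightarrow> real) \<Rightarrow> ereal" where
  "free_energy M K \<beta> p = ereal (ln (partition_fn M K \<beta> p) / \<beta>) + entropy M p / ereal \<beta>"

end

theory Submission
  imports Defs
begin

text \<open>
  The potential
  \<open>y \<mapsto> \<integral> K(x,y) p(x) dx\<close> is affine in \<open>p\<close>, and \<open>ln \<integral> exp\<close> is convex by
  H\<ouml>lder's inequality, so \<open>ln Z\<close> is convex along segments. The entropy is strictly
  convex because \<open>t ln t\<close> is: the integrated convexity defect is a nonnegative function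
  that vanishes almost everywhere only if \<open>p\<^sub>1 = p\<^sub>2\<close> almost everywhere.
  Compactness of \<open>\<Omega>\<close> and continuity of \<open>K\<close> only serve to make the potential continuous
  and bounded, hence \<open>Z\<close> finite and positive.
\<close>

lemma ln_less_minus_one: "0 < (x::real) \<Longrightarrow> x \<noteq> 1 \<Longrightarrow> ln x < x - 1"
  using ln_le_minus_one[of x] ln_eq_minus_one[of x] by linarith

lemma plogp_gt_tangent:
  assumes "0 \<le> t" "0 < m" "t \<noteq> m"
  shows "t * ln m + (t - m) < plogp t"
proof (cases "t = 0")
  case True
  then show ?thesis using assms by (simp add: plogp_def)
next
  case False
  with assms have "0 < t" by simp
  have "t * (ln m - ln t) = t * ln (m / t)" using \<open>0 < t\<close> assms(2) by (simp add: ln_div)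
  also have "\<dots> < t * (m / t - 1)"
    using \<open>0 < t\<close> assms by (intro mult_strict_left_mono ln_less_minus_one) auto
  also have "\<dots> = m - t" using \<open>0 < t\<close> by (simp add: field_simps)
  finally show ?thesis using False by (simp add: plogp_def algebra_simps)
qed

lemma plogp_ge_tangent:
  assumes "0 \<le> t" "0 < m"
  shows "t * ln m + (t - m) \<le> plogp t"
  using plogp_gt_tangent[OF assms] assms by (cases "t = m") (auto simp: plogp_def)

lemma plogp_ge_minus_one: "0 \<le> t \<Longrightarrow> -1 \<le> plogp t"
  using plogp_ge_tangent[of t 1] by simp

lemma plogp_strictly_convex:
  assumes "0 \<le> a" "0 \<le> b" "a \<noteq> b" "0 < l" "l < 1"
  shows "plogp (l * a + (1 - l) * b) < l * plogp a + (1 - l) * plogp b"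
proof -
  define m where "m = l * a + (1 - l) * b"
  have "0 < m"
    using assms mult_pos_pos[of l a] mult_pos_pos[of "1 - l" b] unfolding m_def
    by (smt (verit) mult_nonneg_nonneg)
  have "m - a = (1 - l) * (b - a)" "b - m = l * (b - a)" by (simp_all add: m_def algebra_simps)
  then have "a \<noteq> m" "b \<noteq> m" using assms by auto
  \<comment> \<open>average the tangent lines of \<open>plogp\<close> at \<open>m\<close>\<close>
  have "plogp m = l * (a * ln m + (a - m)) + (1 - l) * (b * ln m + (b - m))"
    using \<open>0 < m\<close> by (simp add: plogp_def m_def algebra_simps)
  also have "\<dots> < l * plogp a + (1 - l) * plogp b"
    using assms \<open>0 < m\<close> \<open>a \<noteq> m\<close> \<open>b \<noteq> m\<close>
    by (intro add_strict_mono mult_strict_left_mono plogp_gt_tangent) auto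
  finally show ?thesis by (simp add: m_def)
qed

lemma plogp_convex:
  assumes "0 \<le> a" "0 \<le> b" "0 < l" "l < 1"
  shows "plogp (l * a + (1 - l) * b) \<le> l * plogp a + (1 - l) * plogp b"
proof (cases "a = b")
  case True
  then show ?thesis by (simp add: algebra_simps)
next
  case False
  then show ?thesis using plogp_strictly_convex[OF assms(1,2) False assms(3,4)] by linarith
qed

lemma integrable_plogp_convex_combination:
  assumes "finite_measure M"
    and [measurable]: "p \<in> borel_measurable M" "q \<in> borel_measurable M"
    and "\<And>x. x \<in> space M \<Longrightarrow> 0 \<le> p x" "\<And>x. x \<in> space M \<Longrightarrow> 0 \<le> q x"
    and "integrable M (\<lambda>x. plogp (p x))" "integrable M (\<lambda>x. plogp (q x))"
    and "0 < l" "l < 1"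
  shows "integrable M (\<lambda>x. plogp (l * p x + (1 - l) * q x))"
proof (rule Bochner_Integration.integrable_bound)
  show "integrable M (\<lambda>x. 1 + \<bar>plogp (p x)\<bar> + \<bar>plogp (q x)\<bar>)"
    by (intro Bochner_Integration.integrable_add integrable_abs assms(6,7)
        finite_measure.integrable_const[OF assms(1)])
  show "(\<lambda>x. plogp (l * p x + (1 - l) * q x)) \<in> borel_measurable M"
    unfolding plogp_def by measurable
  show "AE x in M. norm (plogp (l * p x + (1 - l) * q x)) \<le> norm (1 + \<bar>plogp (p x)\<bar> + \<bar>plogp (q x)\<bar>)"
  proof (intro AE_I2)
    fix x assume x: "x \<in> space M"
    have weighted_le_abs: "c * a \<le> \<bar>a\<bar>" if "0 \<le> c" "c \<le> 1" for a c :: real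
      using that abs_ge_self[of "c * a"] mult_left_le_one_le[of "\<bar>a\<bar>" c] by (simp add: abs_mult)
    have "-1 \<le> plogp (l * p x + (1 - l) * q x)"
      using assms(4,5,8,9) x by (intro plogp_ge_minus_one) simp
    moreover have "plogp (l * p x + (1 - l) * q x) \<le> l * plogp (p x) + (1 - l) * plogp (q x)"
      using assms x by (intro plogp_convex) auto
    moreover have "l * plogp (p x) + (1 - l) * plogp (q x) \<le> \<bar>plogp (p x)\<bar> + \<bar>plogp (q x)\<bar>"
      using assms(8,9) by (intro add_mono weighted_le_abs) auto
    ultimately show "norm (plogp (l * p x + (1 - l) * q x)) \<le> norm (1 + \<bar>plogp (p x)\<bar> + \<bar>plogp (q x)\<bar>)"
      by simp
  qed
qed

lemma integral_plogp_strictly_convex: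
  assumes "finite_measure M"
    and [measurable]: "p \<in> borel_measurable M" "q \<in> borel_measurable M"
    and "\<And>x. x \<in> space M \<Longrightarrow> 0 \<le> p x" "\<And>x. x \<in> space M \<Longrightarrow> 0 \<le> q x"
    and "integrable M (\<lambda>x. plogp (p x))" "integrable M (\<lambda>x. plogp (q x))"
    and "\<not> (AE x in M. p x = q x)" and "0 < l" "l < 1"
  shows "(\<integral>x. plogp (l * p x + (1 - l) * q x) \<partial>M)
           < l * (\<integral>x. plogp (p x) \<partial>M) + (1 - l) * (\<integral>x. plogp (q x) \<partial>M)"
proof -
  define D where "D = (\<lambda>x. l * plogp (p x) + (1 - l) * plogp (q x) - plogp (l * p x + (1 - l) * q x))"
  have int_mix: "integrable M (\<lambda>x. plogp (l * p x + (1 - l) * q x))"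
    using assms by (intro integrable_plogp_convex_combination) auto
  then have int_D: "integrable M D" using assms(6,7) by (simp add: D_def)
  have D_nonneg: "AE x in M. 0 \<le> D x"
  proof (intro AE_I2)
    fix x assume "x \<in> space M"
    then show "0 \<le> D x"
      using plogp_convex[of "p x" "q x" l] assms(4,5,9,10) by (simp add: D_def)
  qed
  have D_zero_imp_eq: "AE x in M. D x = 0 \<longrightarrow> p x = q x"
  proof (intro AE_I2 impI)
    fix x assume "x \<in> space M" "D x = 0"
    then show "p x = q x"
      using plogp_strictly_convex[of "p x" "q x" l] assms(4,5,9,10) by (auto simp: D_def)
  qed
  have "\<not> (AE x in M. D x = 0)"
  proof
    assume "AE x in M. D x = 0"
    then show False using AE_mp[OF _ D_zero_imp_eq] assms(8) by blast
  qed
  then have "0 < integral\<^sup>L M D"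
    using integral_nonneg_eq_0_iff_AE[OF int_D D_nonneg] integral_nonneg_AE[OF D_nonneg] by linarith
  then show ?thesis
    using int_mix assms(6,7) by (simp add: D_def)
qed

lemma integral_exp_pos:
  fixes u :: "'a \<Rightarrow> real"
  assumes "integrable M (\<lambda>x. exp (u x))" and "emeasure M (space M) \<noteq> 0"
  shows "0 < (\<integral>x. exp (u x) \<partial>M)"
proof -
  have "\<not> (AE x in M. exp (u x) = 0)"
    using assms(2) emeasure_eq_0_AE[of "\<lambda>_. True" M] by auto
  then show ?thesis
    using integral_nonneg_eq_0_iff_AE[OF assms(1)] integral_nonneg_AE[of "\<lambda>x. exp (u x)" M]
    by (simp add: less_le)
qed

lemma ln_integral_exp_convex:
  fixes u v :: "'a \<Rightarrow> real"
  assumes [measurable]: "u \<in> borel_measurable M" "v \<in> borel_measurable M"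
    and int_u: "integrable M (\<lambda>x. exp (u x))" and int_v: "integrable M (\<lambda>x. exp (v x))"
    and "emeasure M (space M) \<noteq> 0" and "0 \<le> l" "l \<le> 1"
  shows "ln (\<integral>x. exp (l * u x + (1 - l) * v x) \<partial>M)
           \<le> l * ln (\<integral>x. exp (u x) \<partial>M) + (1 - l) * ln (\<integral>x. exp (v x) \<partial>M)"
proof -
  define A where "A = (\<integral>x. exp (u x) \<partial>M)"
  define B where "B = (\<integral>x. exp (v x) \<partial>M)"
  define C where "C = exp (l * ln A + (1 - l) * ln B)"
  have "0 < A" "0 < B" using assms by (simp_all add: A_def B_def integral_exp_pos)
  define g where "g = (\<lambda>x. C * (l * (exp (u x) / A) + (1 - l) * (exp (v x) / B)))"
  have int_g: "integrable M g" using int_u int_v by (simp add: g_def)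
  \<comment> \<open>weighted AM-GM for \<open>exp u / A\<close> and \<open>exp v / B\<close>\<close>
  have bound: "exp (l * u x + (1 - l) * v x) \<le> g x" for x
  proof -
    have "exp (l * u x + (1 - l) * v x) = C * exp (l * (u x - ln A) + (1 - l) * (v x - ln B))"
      unfolding C_def by (simp add: exp_add[symmetric] algebra_simps)
    also have "\<dots> \<le> C * (l * exp (u x - ln A) + (1 - l) * exp (v x - ln B))"
      using convex_onD[OF exp_convex, of "1 - l" "u x - ln A" "v x - ln B"] assms(6,7)
      by (intro mult_left_mono) (auto simp: C_def)
    also have "\<dots> = g x" using \<open>0 < A\<close> \<open>0 < B\<close> by (simp add: g_def exp_diff)
    finally show ?thesis .
  qed
  have int_mix: "integrable M (\<lambda>x. exp (l * u x + (1 - l) * v x))"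
    by (rule Bochner_Integration.integrable_bound[OF int_g])
      (use bound in \<open>auto intro!: AE_I2 intro: order_trans[OF _ abs_ge_self]\<close>)
  have "(\<integral>x. exp (l * u x + (1 - l) * v x) \<partial>M) \<le> integral\<^sup>L M g"
    using int_mix int_g bound by (intro integral_mono) auto
  also have "\<dots> = C" using \<open>0 < A\<close> \<open>0 < B\<close> int_u int_v by (simp add: g_def A_def B_def)
  finally have "ln (\<integral>x. exp (l * u x + (1 - l) * v x) \<partial>M) \<le> ln C"
    using integral_exp_pos[OF int_mix assms(5)] by (intro ln_mono)
  then show ?thesis by (simp add: C_def A_def B_def)
qed

locale continuous_kernel =
  fixes \<Omega> :: "'a::metric_space set" and M :: "'a measure" and K :: "'a \<Rightarrow> 'a \<Rightarrow> real"
  assumes compact: "compact \<Omega>"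
    and sets_eq: "sets M = sets (restrict_space borel \<Omega>)" and space_eq: "space M = \<Omega>"
    and finite_measure_M: "finite_measure M"
    and continuous_K: "continuous_on (\<Omega> \<times> \<Omega>) (\<lambda>(x, y). K x y)"
begin

definition kernel_integral :: "('a \<Rightarrow> real) \<Rightarrow> 'a \<Rightarrow> real" where
  "kernel_integral p y = (\<integral>x. K x y * p x \<partial>M)"

lemma borel_measurable_continuous_on_space:
  "continuous_on \<Omega> f \<Longrightarrow> (f :: 'a \<Rightarrow> real) \<in> borel_measurable M"
  using borel_measurable_continuous_on_restrict[of \<Omega> f] measurable_cong_sets[OF sets_eq refl, of borel]
  by blast

lemma integrable_continuous_on_space:
  assumes "continuous_on \<Omega> (f :: 'a \<Rightarrow> real)"
  shows "integrable M f"
proof -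
  obtain B where "\<forall>y\<in>f ` \<Omega>. norm y \<le> B"
    using compact_imp_bounded[OF compact_continuous_image[OF assms compact]] by (auto simp: bounded_iff)
  then show ?thesis
    using assms by (intro finite_measure.integrable_const_bound[OF finite_measure_M, of _ B] AE_I2
        borel_measurable_continuous_on_space) (auto simp: space_eq)
qed

lemma kernel_bounded:
  obtains B where "\<And>x y. x \<in> \<Omega> \<Longrightarrow> y \<in> \<Omega> \<Longrightarrow> \<bar>K x y\<bar> \<le> B"
proof -
  have "bounded ((\<lambda>(x, y). K x y) ` (\<Omega> \<times> \<Omega>))"
    by (intro compact_imp_bounded compact_continuous_image continuous_K compact_Times compact)
  then obtain B where B: "\<forall>z \<in> (\<lambda>(x, y). K x y) ` (\<Omega> \<times> \<Omega>). norm z \<le> B"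
    unfolding bounded_iff by blast
  show thesis
  proof (rule that)
    fix x y assume "x \<in> \<Omega>" "y \<in> \<Omega>"
    then show "\<bar>K x y\<bar> \<le> B" using B by (simp add: rev_image_eqI[of "(x, y)"])
  qed
qed

lemma integrable_kernel_mult:
  assumes "integrable M p" and "y \<in> \<Omega>"
  shows "integrable M (\<lambda>x. K x y * p x)"
proof -
  obtain B where B: "\<And>x y. x \<in> \<Omega> \<Longrightarrow> y \<in> \<Omega> \<Longrightarrow> \<bar>K x y\<bar> \<le> B"
    using kernel_bounded by blast
  have "continuous_on \<Omega> (\<lambda>x. (\<lambda>(x, y). K x y) (x, y))"
    using assms(2) by (intro continuous_on_compose2[OF continuous_K] continuous_on_Pair
        continuous_on_id continuous_on_const) auto
  then have [measurable]: "(\<lambda>x. K x y) \<in> borel_measurable M"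
    using borel_measurable_continuous_on_space by simp
  have [measurable]: "p \<in> borel_measurable M" using assms(1) by (rule borel_measurable_integrable)
  have bound: "norm (K x y * p x) \<le> norm (B * p x)" if "x \<in> space M" for x
  proof -
    have "\<bar>K x y\<bar> * \<bar>p x\<bar> \<le> \<bar>B\<bar> * \<bar>p x\<bar>"
      using B[of x y] that assms(2) by (intro mult_right_mono) (auto simp: space_eq)
    then show ?thesis by (simp add: abs_mult)
  qed
  show ?thesis
    by (rule Bochner_Integration.integrable_bound[where f="\<lambda>x. B * p x"])
      (use assms(1) bound in \<open>auto intro: AE_I2\<close>)
qed

lemma continuous_on_kernel_integral:
  assumes p: "integrable M p"
  shows "continuous_on \<Omega> (kernel_integral p)"
  unfolding continuous_on_iff
proof (intro ballI allI impI)
  fix y e assume y: "y \<in> \<Omega>" and "(0::real) < e"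
  define C where "C = (\<integral>x. \<bar>p x\<bar> \<partial>M) + 1"
  have "0 \<le> (\<integral>x. \<bar>p x\<bar> \<partial>M)" by (rule integral_nonneg_AE) simp
  then have "0 < C" unfolding C_def by linarith
  have "uniformly_continuous_on (\<Omega> \<times> \<Omega>) (\<lambda>(x, y). K x y)"
    by (rule compact_uniformly_continuous[OF continuous_K compact_Times[OF compact compact]])
  then obtain d where "0 < d" and d: "\<And>a b. a \<in> \<Omega> \<times> \<Omega> \<Longrightarrow> b \<in> \<Omega> \<times> \<Omega> \<Longrightarrow> dist b a < d \<Longrightarrow>
       dist ((\<lambda>(x, y). K x y) b) ((\<lambda>(x, y). K x y) a) < e / C"
    using \<open>0 < e\<close> \<open>0 < C\<close> unfolding uniformly_continuous_on_def by (metis divide_pos_pos)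
  show "\<exists>d>0. \<forall>y'\<in>\<Omega>. dist y' y < d \<longrightarrow> dist (kernel_integral p y') (kernel_integral p y) < e"
  proof (intro exI[of _ d] conjI ballI impI \<open>0 < d\<close>)
    fix y' assume y': "y' \<in> \<Omega>" "dist y' y < d"
    have K_close: "\<bar>K x y' * p x - K x y * p x\<bar> \<le> e / C * \<bar>p x\<bar>" if "x \<in> space M" for x
    proof -
      have "\<bar>K x y' - K x y\<bar> \<le> e / C"
        using d[of "(x, y)" "(x, y')"] that y y' by (simp add: space_eq dist_Pair_Pair dist_real_def)
      then have "\<bar>K x y' - K x y\<bar> * \<bar>p x\<bar> \<le> e / C * \<bar>p x\<bar>"
        by (rule mult_right_mono) simp
      then show ?thesis by (simp add: abs_mult[symmetric] left_diff_distrib)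
    qed
    have "\<bar>kernel_integral p y' - kernel_integral p y\<bar> = \<bar>\<integral>x. K x y' * p x - K x y * p x \<partial>M\<bar>"
      using integrable_kernel_mult[OF p y'(1)] integrable_kernel_mult[OF p y] by (simp add: kernel_integral_def)
    also have "\<dots> \<le> (\<integral>x. e / C * \<bar>p x\<bar> \<partial>M)"
      using K_close integrable_kernel_mult[OF p y'(1)] integrable_kernel_mult[OF p y] p
      by (intro integral_abs_bound[THEN order_trans] integral_mono) auto
    also have "\<dots> = e / C * (\<integral>x. \<bar>p x\<bar> \<partial>M)" by simp
    also have "\<dots> < e / C * C"
      using \<open>0 < e\<close> \<open>0 < C\<close> by (intro mult_strict_left_mono) (auto simp: C_def)
    finally show "dist (kernel_integral p y') (kernel_integral p y) < e"
      using \<open>0 < C\<close> by (simp add: dist_real_def)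
  qed
qed

lemma kernel_integral_convex_combination:
  assumes "integrable M p" "integrable M q" "y \<in> \<Omega>"
  shows "kernel_integral (\<lambda>x. l * p x + (1 - l) * q x) y = l * kernel_integral p y + (1 - l) * kernel_integral q y"
  using integrable_kernel_mult[OF assms(1,3)] integrable_kernel_mult[OF assms(2,3)]
  by (simp add: kernel_integral_def algebra_simps)

lemma integrable_exp_kernel_integral:
  assumes "integrable M p"
  shows "integrable M (\<lambda>y. exp (\<beta> * kernel_integral p y))"
  by (intro integrable_continuous_on_space continuous_on_exp continuous_on_mult_left
      continuous_on_kernel_integral[OF assms])

lemma ln_partition_fn_convex:
  assumes "integrable M p" "integrable M q" "emeasure M (space M) \<noteq> 0" "0 \<le> l" "l \<le> 1"
  shows "ln (partition_fn M K \<beta> (\<lambda>x. l * p x + (1 - l) * q x))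
           \<le> l * ln (partition_fn M K \<beta> p) + (1 - l) * ln (partition_fn M K \<beta> q)"
proof -
  have partition_fn_eq: "partition_fn M K \<beta> r = (\<integral>y. exp (\<beta> * kernel_integral r y) \<partial>M)" for r
    by (simp add: partition_fn_def kernel_integral_def)
  have measurable: "(\<lambda>y. \<beta> * kernel_integral r y) \<in> borel_measurable M" if "integrable M r" for r
    by (intro borel_measurable_continuous_on_space continuous_on_mult_left
        continuous_on_kernel_integral[OF that])
  have "ln (partition_fn M K \<beta> (\<lambda>x. l * p x + (1 - l) * q x))
      = ln (\<integral>y. exp (l * (\<beta> * kernel_integral p y) + (1 - l) * (\<beta> * kernel_integral q y)) \<partial>M)"
    unfolding partition_fn_eq
  proof (intro arg_cong[where f = ln] Bochner_Integration.integral_cong refl)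
    fix y assume "y \<in> space M"
    then have "kernel_integral (\<lambda>x. l * p x + (1 - l) * q x) y
        = l * kernel_integral p y + (1 - l) * kernel_integral q y"
      using assms(1,2) by (simp add: space_eq kernel_integral_convex_combination)
    then show "exp (\<beta> * kernel_integral (\<lambda>x. l * p x + (1 - l) * q x) y)
        = exp (l * (\<beta> * kernel_integral p y) + (1 - l) * (\<beta> * kernel_integral q y))"
      by (simp only:) (simp add: algebra_simps)
  qed
  also have "\<dots> \<le> l * ln (partition_fn M K \<beta> p) + (1 - l) * ln (partition_fn M K \<beta> q)"
    unfolding partition_fn_eq
    by (intro ln_integral_exp_convex measurable integrable_exp_kernel_integral assms)
  finally show ?thesis .
qed

end

lemma is_density_space_nonzero:
  assumes "is_density M p"
  shows "emeasure M (space M) \<noteq> 0"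
proof
  assume "emeasure M (space M) = 0"
  then have "(\<integral>x. p x \<partial>M) = 0" by (intro integral_eq_zero_AE emeasure_0_AE)
  then show False using assms by (simp add: is_density_def)
qed

lemma integrable_plogp_if_entropy_finite:
  "entropy M p < \<infinity> \<Longrightarrow> integrable M (\<lambda>x. plogp (p x))"
  by (auto simp: entropy_def split: if_splits)

lemma free_energy_eq:
  assumes "0 < \<beta>" and "integrable M (\<lambda>x. plogp (p x))"
  shows "free_energy M K \<beta> p = ereal ((ln (partition_fn M K \<beta> p) + (\<integral>x. plogp (p x) \<partial>M)) / \<beta>)"
  using assms by (simp add: free_energy_def entropy_def add_divide_distrib)

lemma free_energy_less_convex_combination:
  assumes "0 < \<beta>"
    and "integrable M (\<lambda>x. plogp (p x))"
    and "integrable M (\<lambda>x. plogp (p1 x))" "integrable M (\<lambda>x. plogp (p2 x))"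
    and "ln (partition_fn M K \<beta> p)
           \<le> l * ln (partition_fn M K \<beta> p1) + (1 - l) * ln (partition_fn M K \<beta> p2)"
    and "(\<integral>x. plogp (p x) \<partial>M)
           < l * (\<integral>x. plogp (p1 x) \<partial>M) + (1 - l) * (\<integral>x. plogp (p2 x) \<partial>M)"
  shows "free_energy M K \<beta> p < ereal l * free_energy M K \<beta> p1 + ereal (1 - l) * free_energy M K \<beta> p2"
proof -
  define F where "F = (\<lambda>q. ln (partition_fn M K \<beta> q) + (\<integral>x. plogp (q x) \<partial>M))"
  have "F p / \<beta> < (l * F p1 + (1 - l) * F p2) / \<beta>"
    using assms(1,5,6) by (intro divide_strict_right_mono) (simp_all add: F_def algebra_simps)
  also have "\<dots> = l * (F p1 / \<beta>) + (1 - l) * (F p2 / \<beta>)"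
    by (simp add: add_divide_distrib)
  finally show ?thesis
    using assms(2-4) by (simp add: free_energy_eq[OF assms(1)] F_def)
qed

theorem proposition1:
  fixes \<Omega> :: "'a::metric_space set" and M :: "'a measure"
    and K :: "'a \<Rightarrow> 'a \<Rightarrow> real" and \<beta> lam :: real and p1 p2 :: "'a \<Rightarrow> real"
  assumes "compact \<Omega>"
    and "sets M = sets (restrict_space borel \<Omega>)" and "space M = \<Omega>"
    and "finite_measure M"
    and "continuous_on (\<Omega> \<times> \<Omega>) (\<lambda>(x, y). K x y)"
    and "\<beta> > 0"
    and "is_density M p1" and "is_density M p2"
    and "\<not> (AE x in M. p1 x = p2 x)"
    and "entropy M p1 < \<infinity>" and "entropy M p2 < \<infinity>"
    and "0 < lam" and "lam < 1"
  shows "free_energy M K \<beta> (\<lambda>x. lam * p1 x + (1 - lam) * p2 x)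
         < ereal lam * free_energy M K \<beta> p1 + ereal (1 - lam) * free_energy M K \<beta> p2"
proof -
  interpret continuous_kernel \<Omega> M K by (rule continuous_kernel.intro[OF assms(1-5)])
  have p1: "p1 \<in> borel_measurable M" "integrable M p1" "\<And>x. x \<in> space M \<Longrightarrow> 0 \<le> p1 x"
    and p2: "p2 \<in> borel_measurable M" "integrable M p2" "\<And>x. x \<in> space M \<Longrightarrow> 0 \<le> p2 x"
    using assms(7,8) by (auto simp: is_density_def)
  have S1: "integrable M (\<lambda>x. plogp (p1 x))" and S2: "integrable M (\<lambda>x. plogp (p2 x))"
    using assms(10,11) by (simp_all add: integrable_plogp_if_entropy_finite)
  show ?thesis
  proof (rule free_energy_less_convex_combination[OF assms(6) _ S1 S2])
    show "integrable M (\<lambda>x. plogp (lam * p1 x + (1 - lam) * p2 x))"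
      using assms(4,12,13) p1 p2 S1 S2 by (intro integrable_plogp_convex_combination)
    show "ln (partition_fn M K \<beta> (\<lambda>x. lam * p1 x + (1 - lam) * p2 x))
        \<le> lam * ln (partition_fn M K \<beta> p1) + (1 - lam) * ln (partition_fn M K \<beta> p2)"
      using assms(12,13) p1 p2 is_density_space_nonzero[OF assms(7)]
      by (intro ln_partition_fn_convex) auto
    show "(\<integral>x. plogp (lam * p1 x + (1 - lam) * p2 x) \<partial>M)
        < lam * (\<integral>x. plogp (p1 x) \<partial>M) + (1 - lam) * (\<integral>x. plogp (p2 x) \<partial>M)"
      using assms(4,9,12,13) p1 p2 S1 S2 by (intro integral_plogp_strictly_convex)
  qed
qed

end
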